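(* Let $\mathcal H$ be a finite-dimensional Hilbert space, $\rho=|\psi\rangle\langle\psi|$ a pure state, and let $\mathcal S=\{\rho,\sigma^{(1)},\dots,\sigma^{(n)}\}$ be a medium consistent family of histories. Then there exists a medium consistent family $\mathcal S'=\{\rho,\sigma'^{(1)},\dots,\sigma'^{(n)}\}$ in which each $\sigma'^{(i)}=\{|\phi^{(i)}_j\rangle\langle\phi^{(i)}_j|\}_j$ consists of rank-1 projectors and is a fine graining of $\sigma^{(i)}$.
   Context: A set of projectors $\sigma=\{P_\alpha\}_{\alpha=1,\dots,m}$ on $\mathcal H$ is exhaustive and exclusive if $\sum_\alpha P_\alpha=\mathbb 1$ and $P_\alpha P_\beta=\delta_{\alpha\beta}P_\alpha$. A family of histories $\{\rho,\sigma^{(1)},\dots,\sigma^{(n)}\}$ consists of an initial density matrix $\rho$ and exhaustive exclusive sets $\sigma^{(j)}=\{P^{(j)}_{\alpha_j}\}$ (Heisenberg-picture projectors at successive times $t_1<\dots<t_n$). A history is a tuple $\alpha=(\alpha_1,\dots,\alpha_n)$ with history operator $C_\alpha=P^{(1)}_{\alpha_1}\cdots P^{(n)}_{\alpha_n}$, probability $Pr(\alpha)=\mathrm{Tr}\{C_\alpha^\dagger\rho C_\alpha\}$ and coherence function $D(\alpha;\beta)=\mathrm{Tr}\{C_\alpha^\dagger\rho C_\beta\}$. The family is medium consistent if $D(\alpha;\beta)=\delta_{\alpha\beta}Pr(\alpha)$ for all histories $\alpha,\beta$. An exhaustive exclusive set $\sigma'$ is a fine graining of $\sigma$ if every projector of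 $\sigma$ is a sum of projectors of $\sigma'$ (equivalently $\sigma$ is a coarse graining of $\sigma'$). *)

theory Defs
  imports "HOL-Analysis.Analysis"
begin

type_synonym 'n cmat = "complex^'n^'n"

definition dagger :: "('n::finite) cmat \<Rightarrow> 'n cmat" where
  "dagger A = (\<chi> i j. cnj (A $ j $ i))"

definition mtrace :: "('n::finite) cmat \<Rightarrow> complex" where
  "mtrace A = (\<Sum>i\<in>UNIV. A $ i $ i)"

definition outer :: "complex^('n::finite) \<Rightarrow> complex^'n \<Rightarrow> 'n cmat" where
  "outer \<psi> \<phi> = (\<chi> i j. \<psi> $ i * cnj (\<phi> $ j))"

definition is_projector :: "('n::finite) cmat \<Rightarrow> bool" where
  "is_projector P \<longleftrightarrow> P ** P = P \<and> dagger P = P"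

definition rank1_projector :: "('n::finite) cmat \<Rightarrow> bool" where
  "rank1_projector P \<longleftrightarrow> (\<exists>\<phi>. norm \<phi> = 1 \<and> P = outer \<phi> \<phi>)"

definition pure_state :: "('n::finite) cmat \<Rightarrow> bool" where
  "pure_state \<rho> \<longleftrightarrow> (\<exists>\<psi>. norm \<psi> = 1 \<and> \<rho> = outer \<psi> \<psi>)"

definition exh_excl :: "('n::finite) cmat list \<Rightarrow> bool" where
  "exh_excl \<sigma> \<longleftrightarrow>
     (\<forall>P\<in>set \<sigma>. is_projector P) \<and>
     (\<Sum>a<length \<sigma>. \<sigma> ! a) = mat 1 \<and>
     (\<forall>a<length \<sigma>. \<forall>b<length \<sigma>. \<sigma> ! a ** \<sigma> ! b = (if a = b then \<sigma> ! a else 0))"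

text \<open>A family of histories (apart from rho) is the list of sets sigma^(1),...,sigma^(n).\<close>
definition histories :: "('n::finite) cmat list list \<Rightarrow> nat list set" where
  "histories F = {a. length a = length F \<and> (\<forall>j<length F. a ! j < length (F ! j))}"

definition hist_op :: "('n::finite) cmat list list \<Rightarrow> nat list \<Rightarrow> 'n cmat" where
  "hist_op F a = foldr (**) (map (\<lambda>j. F ! j ! (a ! j)) [0..<length F]) (mat 1)"

definition coherence :: "('n::finite) cmat \<Rightarrow> 'n cmat list list \<Rightarrow> nat list \<Rightarrow> nat list \<Rightarrow> complex" where
  "coherence \<rho> F a b = mtrace (dagger (hist_op F a) ** \<rho> ** hist_op F b)"

definition hist_prob :: "('n::finite) cmat \<Rightarrow> 'n cmat list list \<Rightarrow> nat list \<Rightarrow> complex" where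
  "hist_prob \<rho> F a = mtrace (dagger (hist_op F a) ** \<rho> ** hist_op F a)"

definition medium_consistent :: "('n::finite) cmat \<Rightarrow> 'n cmat list list \<Rightarrow> bool" where
  "medium_consistent \<rho> F \<longleftrightarrow>
     (\<forall>a\<in>histories F. \<forall>b\<in>histories F.
        coherence \<rho> F a b = (if a = b then hist_prob \<rho> F a else 0))"

definition fine_graining :: "('n::finite) cmat list \<Rightarrow> 'n cmat list \<Rightarrow> bool" where
  "fine_graining \<sigma>' \<sigma> \<longleftrightarrow>
     (\<forall>a<length \<sigma>. \<exists>S\<subseteq>{..<length \<sigma>'}. \<sigma> ! a = (\<Sum>k\<in>S. \<sigma>' ! k))"

end

theory Submission
  imports Defs
begin

text \<open>
  For a pure state rho = |psi><psi| the coherence D(alpha; beta) is the inner product of the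
  branch vectors C_alpha^dagger psi and C_beta^dagger psi, so medium consistency says that
  branch vectors of distinct histories are orthogonal. The sets sigma^(1), ..., sigma^(n) are
  refined one at a time, keeping the invariant that every branch vector of the refined family
  is zero or a branch vector of the original one. For the next set, the vectors P_b w, with w
  ranging over the branch vectors of the earlier sets, lie in the range of P_b and are pairwise
  orthogonal by consistency; normalising the nonzero ones and extending them to an orthonormal
  basis of that range splits P_b into rank-one projectors. A basis vector phi is either the
  direction of P_b w or orthogonal to it, so the new branch vector <w, phi> phi is 0 or P_b w:
  the invariant persists, and distinct refined branches stay orthogonal.
\<close>

section \<open>Hermitian inner product, outer products and projectors\<close>

(* Linear in the first, antilinear in the second argument: cinner x y is <y|x> in Dirac notation. *)
definition cinner :: "complex^('n::finite) \<Rightarrow> complex^'n \<Rightarrow> complex" where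
  "cinner x y = (\<Sum>i\<in>UNIV. x $ i * cnj (y $ i))"

lemma cinner_commute: "cinner y x = cnj (cinner x y)"
  by (simp add: cinner_def mult.commute)

lemma cinner_zero_left [simp]: "cinner 0 y = 0"
  and cinner_zero_right [simp]: "cinner x 0 = 0"
  by (simp_all add: cinner_def)

lemma cinner_scalar_left [simp]: "cinner (c *s x) y = c * cinner x y"
  and cinner_scalar_right [simp]: "cinner x (c *s y) = cnj c * cinner x y"
  by (simp_all add: cinner_def sum_distrib_left mult_ac)

lemma cinner_add_left: "cinner (x + y) z = cinner x z + cinner y z"
  by (simp add: cinner_def sum.distrib algebra_simps)

lemma cinner_sum_left: "cinner (sum f S) y = (\<Sum>s\<in>S. cinner (f s) y)"
  by (induction S rule: infinite_finite_induct) (auto simp: cinner_add_left)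

lemma cinner_self: "cinner x x = of_real ((norm x)\<^sup>2)"
proof -
  have "(norm x)\<^sup>2 = (\<Sum>i\<in>UNIV. (cmod (x $ i))\<^sup>2)"
    unfolding norm_vec_def L2_set_def by (simp add: sum_nonneg)
  then show ?thesis
    unfolding cinner_def by (simp flip: complex_norm_square)
qed

lemma cinner_self_eq_zero [simp]: "cinner x x = 0 \<longleftrightarrow> x = 0"
  by (simp add: cinner_self)

lemma cinner_self_eq_one_iff: "cinner x x = 1 \<longleftrightarrow> norm x = 1"
  by (auto simp: cinner_self power2_eq_1_iff simp del: of_real_power)
    (use norm_ge_zero[of x] in linarith)

lemma sgn_vec_eq_scalar: "sgn x = of_real (1 / norm x) *s (x :: complex^'n::finite)"
  by (simp add: sgn_div_norm vec_eq_iff divide_inverse_commute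
      scaleR_conv_of_real[where 'a = complex])

lemma cinner_self_unit: "norm x = 1 \<Longrightarrow> cinner x x = 1"
  by (simp add: cinner_self_eq_one_iff)

lemma cinner_sgn_scale: "cinner x (sgn x) *s sgn x = x"
proof (cases "x = 0")
  case False
  then have "cinner x (sgn x) *s sgn x = (of_real ((norm x)\<^sup>2 / (norm x)\<^sup>2) :: complex) *s x"
    by (simp add: sgn_vec_eq_scalar cinner_self vector_smult_assoc power2_eq_square mult_ac)
  then show ?thesis using False by simp
qed simp

lemma cinner_mult_vec_left: "cinner (A *v x) y = cinner x (dagger A *v y)"
proof -
  have "cinner (A *v x) y = (\<Sum>i\<in>UNIV. \<Sum>j\<in>UNIV. A $ i $ j * x $ j * cnj (y $ i))"
    unfolding cinner_def matrix_vector_mult_def by (simp add: sum_distrib_right)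
  also have "\<dots> = (\<Sum>j\<in>UNIV. \<Sum>i\<in>UNIV. A $ i $ j * x $ j * cnj (y $ i))"
    by (rule sum.swap)
  also have "\<dots> = cinner x (dagger A *v y)"
    unfolding cinner_def matrix_vector_mult_def dagger_def
    by (simp add: sum_distrib_left mult.commute mult.left_commute)
  finally show ?thesis .
qed

lemma dagger_mult: "dagger (A ** B) = dagger B ** dagger A"
  by (simp add: dagger_def matrix_matrix_mult_def vec_eq_iff mult.commute)

lemma dagger_diff: "dagger (A - B) = dagger A - dagger B"
  by (simp add: dagger_def vec_eq_iff)

lemma matrix_mult_diff_left: "(A::complex^'n^'m) ** (B - C) = A ** B - A ** C"
  by (simp add: matrix_matrix_mult_def vec_eq_iff sum_subtractf right_diff_distrib)

lemma matrix_mult_diff_right: "((A::complex^'n^'m) - B) ** C = A ** C - B ** C"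
  by (simp add: matrix_matrix_mult_def vec_eq_iff sum_subtractf left_diff_distrib)

lemma mtrace_diff: "mtrace (A - B) = mtrace A - mtrace B"
  by (simp add: mtrace_def sum_subtractf)

lemma sum_matrix_vector_mult: "sum f S *v x = (\<Sum>s\<in>S. f s *v x)"
  by (induction S rule: infinite_finite_induct) (auto simp: matrix_vector_mult_add_rdistrib)

lemma outer_mult_vec: "outer x y *v z = cinner z y *s x"
  by (simp add: outer_def matrix_vector_mult_def cinner_def vec_eq_iff sum_distrib_left mult_ac)

lemma mult_outer: "A ** outer x y = outer (A *v x) y"
  by (simp add: outer_def matrix_vector_mult_def matrix_matrix_mult_def vec_eq_iff
      sum_distrib_left sum_distrib_right mult_ac)

lemma outer_mult: "outer x y ** B = outer x (dagger B *v y)"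
  by (simp add: outer_def matrix_vector_mult_def matrix_matrix_mult_def dagger_def vec_eq_iff
      sum_distrib_left mult_ac)

lemma outer_zero_left [simp]: "outer 0 y = 0"
  by (simp add: outer_def vec_eq_iff)

lemma dagger_outer: "dagger (outer x y) = outer y x"
  by (simp add: outer_def dagger_def vec_eq_iff)

lemma mtrace_outer: "mtrace (outer x y) = cinner x y"
  by (simp add: outer_def mtrace_def cinner_def)

lemma projector_mult_vec_idem: "is_projector P \<Longrightarrow> P *v (P *v x) = P *v x"
  by (simp add: is_projector_def matrix_vector_mul_assoc)

lemma cinner_projector_left: "is_projector P \<Longrightarrow> cinner (P *v x) y = cinner x (P *v y)"
  by (simp add: is_projector_def cinner_mult_vec_left)

lemma projector_trace_nonneg:
  assumes "is_projector P"
  shows "Re (mtrace P) \<ge> 0"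
proof -
  have "P $ i $ i = (\<Sum>j\<in>UNIV. of_real ((cmod (P $ i $ j))\<^sup>2))" for i
  proof -
    have "P $ i $ i = (P ** dagger P) $ i $ i"
      using assms by (simp add: is_projector_def)
    also have "\<dots> = (\<Sum>j\<in>UNIV. P $ i $ j * dagger P $ j $ i)"
      by (simp add: matrix_matrix_mult_def)
    also have "\<dots> = (\<Sum>j\<in>UNIV. of_real ((cmod (P $ i $ j))\<^sup>2))"
      by (simp add: dagger_def complex_norm_square del: of_real_power)
    finally show ?thesis .
  qed
  then have "Re (mtrace P) = (\<Sum>i\<in>UNIV. \<Sum>j\<in>UNIV. (cmod (P $ i $ j))\<^sup>2)"
    by (simp add: mtrace_def Re_sum)
  also have "\<dots> \<ge> 0"
    by (intro sum_nonneg) auto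
  finally show ?thesis .
qed

lemma projector_nonzero_fixed_vector:
  assumes "is_projector P" and "P \<noteq> 0"
  obtains v where "v \<noteq> 0" and "P *v v = v"
proof -
  obtain x where "P *v x \<noteq> 0"
    using assms(2) matrix_eq[of P 0] by auto
  then show ?thesis
    using that projector_mult_vec_idem[OF assms(1)] by blast
qed

lemma is_projector_outer: "norm \<phi> = 1 \<Longrightarrow> is_projector (outer \<phi> \<phi>)"
  by (simp add: is_projector_def mult_outer outer_mult_vec dagger_outer cinner_self_unit)

section \<open>Orthonormal decomposition of a projector\<close>

definition orthonormal :: "(complex^('n::finite)) set \<Rightarrow> bool" where
  "orthonormal \<Phi> \<longleftrightarrow> (\<forall>\<phi>\<in>\<Phi>. norm \<phi> = 1) \<and> pairwise (\<lambda>\<phi> \<phi>'. cinner \<phi> \<phi>' = 0) \<Phi>"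

lemma orthonormal_cinner:
  assumes "orthonormal \<Phi>" and "\<phi> \<in> \<Phi>" and "\<phi>' \<in> \<Phi>"
  shows "cinner \<phi> \<phi>' = (if \<phi> = \<phi>' then 1 else 0)"
  using assms by (auto simp: orthonormal_def pairwise_def cinner_self_unit)

lemma orthonormal_insert:
  assumes "orthonormal \<Phi>" and "norm \<phi> = 1" and "\<And>\<phi>'. \<phi>' \<in> \<Phi> \<Longrightarrow> cinner \<phi>' \<phi> = 0"
  shows "orthonormal (insert \<phi> \<Phi>)"
  using assms cinner_commute[of \<phi>]
  by (auto simp: orthonormal_def pairwise_insert)

lemma sum_outer_mult_vec:
  assumes "finite \<Phi>" and "orthonormal \<Phi>" and "\<phi> \<in> \<Phi>"
  shows "(\<Sum>\<phi>'\<in>\<Phi>. outer \<phi>' \<phi>') *v \<phi> = \<phi>"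
proof -
  have "(\<Sum>\<phi>'\<in>\<Phi>. outer \<phi>' \<phi>') *v \<phi> = (\<Sum>\<phi>'\<in>\<Phi>. cinner \<phi> \<phi>' *s \<phi>')"
    by (simp add: sum_matrix_vector_mult outer_mult_vec)
  also have "\<dots> = cinner \<phi> \<phi> *s \<phi>"
  proof -
    have "cinner \<phi> \<phi>' = 0" if "\<phi>' \<in> \<Phi> - {\<phi>}" for \<phi>'
      using orthonormal_cinner[OF assms(2,3)] that by auto
    then show ?thesis
      using assms(1,3) by (simp add: sum.remove[of _ \<phi>])
  qed
  also have "\<dots> = \<phi>"
    using assms by (simp add: orthonormal_def cinner_self_unit)
  finally show ?thesis .
qed

lemma projector_minus_outer:
  assumes "is_projector P" and "P *v \<phi> = \<phi>" and "norm \<phi> = 1"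
  shows "is_projector (P - outer \<phi> \<phi>)" and "mtrace (P - outer \<phi> \<phi>) = mtrace P - 1"
    and "(P - outer \<phi> \<phi>) *v \<phi> = 0"
proof -
  have "P ** outer \<phi> \<phi> = outer \<phi> \<phi>" and "outer \<phi> \<phi> ** P = outer \<phi> \<phi>"
    using assms by (simp_all add: mult_outer outer_mult is_projector_def)
  moreover have "outer \<phi> \<phi> ** outer \<phi> \<phi> = outer \<phi> \<phi>"
    using assms(3) by (simp add: mult_outer outer_mult_vec cinner_self_unit)
  ultimately show "is_projector (P - outer \<phi> \<phi>)"
    using assms(1)
    by (simp add: is_projector_def matrix_mult_diff_left matrix_mult_diff_right dagger_diff
        dagger_outer)
  show "mtrace (P - outer \<phi> \<phi>) = mtrace P - 1" and "(P - outer \<phi> \<phi>) *v \<phi> = 0"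
    using assms(2,3)
    by (simp_all add: mtrace_diff mtrace_outer matrix_vector_mult_diff_rdistrib outer_mult_vec
        cinner_self_unit)
qed

lemma orthonormal_decomposition_insert:
  assumes "finite \<Phi>" and "orthonormal \<Phi>" and "is_projector (\<Sum>\<phi>'\<in>\<Phi>. outer \<phi>' \<phi>')"
    and "(\<Sum>\<phi>'\<in>\<Phi>. outer \<phi>' \<phi>') *v \<phi> = 0" and "norm \<phi> = 1"
  shows "orthonormal (insert \<phi> \<Phi>)"
    and "(\<Sum>\<phi>'\<in>insert \<phi> \<Phi>. outer \<phi>' \<phi>') = (\<Sum>\<phi>'\<in>\<Phi>. outer \<phi>' \<phi>') + outer \<phi> \<phi>"
proof -
  have orth: "cinner \<phi>' \<phi> = 0" if "\<phi>' \<in> \<Phi>" for \<phi>'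
    using sum_outer_mult_vec[OF assms(1,2) that] cinner_projector_left[OF assms(3), of \<phi>' \<phi>]
      assms(4)
    by simp
  show "orthonormal (insert \<phi> \<Phi>)"
    using assms(2,5) orth by (rule orthonormal_insert)
  have "\<phi> \<notin> \<Phi>"
    using orth assms(5) by (metis cinner_self_unit zero_neq_one)
  then show "(\<Sum>\<phi>'\<in>insert \<phi> \<Phi>. outer \<phi>' \<phi>') = (\<Sum>\<phi>'\<in>\<Phi>. outer \<phi>' \<phi>') + outer \<phi> \<phi>"
    using assms(1) by (simp add: add.commute)
qed

lemma projector_fixed_vector_orthogonal_to_rest:
  assumes "is_projector P" and "P \<noteq> 0" and "\<And>w. w \<in> W \<Longrightarrow> P *v w = w"
    and "pairwise (\<lambda>w w'. cinner w w' = 0) W"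
  obtains v where "v \<noteq> 0" and "P *v v = v" and "\<And>w. w \<in> W - {v} \<Longrightarrow> cinner w v = 0"
proof (cases "W \<subseteq> {0}")
  case True
  obtain v where "v \<noteq> 0" and "P *v v = v"
    using projector_nonzero_fixed_vector[OF assms(1,2)] .
  moreover have "\<forall>w\<in>W - {v}. cinner w v = 0"
    using True by auto
  ultimately show ?thesis
    using that by blast
next
  case False
  then obtain v where "v \<in> W" and "v \<noteq> 0"
    by blast
  then show ?thesis
    using that assms(3,4) unfolding pairwise_def by blast
qed

lemma projector_orthonormal_decomposition:
  assumes "is_projector P" and "finite W" and "\<And>w. w \<in> W \<Longrightarrow> P *v w = w"
    and "pairwise (\<lambda>w w'. cinner w w' = 0) W"
  shows "\<exists>\<Phi>. finite \<Phi> \<and> orthonormal \<Phi> \<and> P = (\<Sum>\<phi>\<in>\<Phi>. outer \<phi> \<phi>) \<and> sgn ` (W - {0}) \<subseteq> \<Phi>"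
proof -
  \<comment> \<open>Induction on a bound for the trace, i.e. the rank, which drops by one when a unit vector
    of the range is split off.\<close>
  obtain n :: nat where "Re (mtrace P) < n"
    using reals_Archimedean2 by blast
  then show ?thesis
    using assms
  proof (induction n arbitrary: P W)
    case (0 P W)
    then show ?case
      using projector_trace_nonneg[of P] by simp
  next
    case (Suc n P W)
    show ?case
    proof (cases "P = 0")
      case True
      then have "W - {0} = {}"
        using Suc.prems(4) by force
      then show ?thesis
        using True by (intro exI[of _ "{}"]) (simp add: orthonormal_def)
    next
      case False
      then obtain v where "v \<noteq> 0" and "P *v v = v" and orth_v: "\<And>w. w \<in> W - {v} \<Longrightarrow> cinner w v = 0"
        using projector_fixed_vector_orthogonal_to_rest Suc.prems(2,4,5) by metis
      define \<phi> where "\<phi> = sgn v"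
      have "norm \<phi> = 1"
        using \<open>v \<noteq> 0\<close> by (simp add: \<phi>_def norm_sgn)
      have "P *v \<phi> = \<phi>"
        using \<open>P *v v = v\<close> by (simp add: \<phi>_def sgn_vec_eq_scalar vector_scalar_commute)
      define P' where "P' = P - outer \<phi> \<phi>"
      note P' = projector_minus_outer[OF Suc.prems(2) \<open>P *v \<phi> = \<phi>\<close> \<open>norm \<phi> = 1\<close>, folded P'_def]
      have "P' *v w = w" if "w \<in> W - {v}" for w
        using Suc.prems(4) orth_v[OF that] that
        by (simp add: P'_def \<phi>_def sgn_vec_eq_scalar matrix_vector_mult_diff_rdistrib
            outer_mult_vec)
      moreover have "pairwise (\<lambda>w w'. cinner w w' = 0) (W - {v})"
        using Suc.prems(5) by (rule pairwise_subset) blast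
      ultimately obtain \<Phi>' where "finite \<Phi>'" and "orthonormal \<Phi>'"
        and P'_sum: "P' = (\<Sum>\<phi>\<in>\<Phi>'. outer \<phi> \<phi>)" and "sgn ` (W - {v} - {0}) \<subseteq> \<Phi>'"
        using Suc.IH[of P' "W - {v}"] Suc.prems(1,3) P'(1,2) by auto
      moreover note orthonormal_decomposition_insert[OF \<open>finite \<Phi>'\<close> \<open>orthonormal \<Phi>'\<close>,
        folded P'_sum, OF P'(1,3) \<open>norm \<phi> = 1\<close>]
      moreover have "P = P' + outer \<phi> \<phi>"
        by (simp add: P'_def)
      ultimately show ?thesis
        by (intro exI[of _ "insert \<phi> \<Phi>'"]) (auto simp: \<phi>_def)
    qed
  qed
qed

section \<open>Histories and branch vectors\<close>

lemma histories_Nil [simp]: "histories [] = {[]}"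
  by (auto simp: histories_def)

lemma length_histories: "a \<in> histories F \<Longrightarrow> length a = length F"
  by (simp add: histories_def)

lemma append_singleton_in_histories_iff:
  "a @ [l] \<in> histories (G @ [\<sigma>]) \<longleftrightarrow> a \<in> histories G \<and> l < length \<sigma>"
proof
  assume hist: "a @ [l] \<in> histories (G @ [\<sigma>])"
  then have len: "length a = length G"
    by (simp add: histories_def)
  have entry: "(a @ [l]) ! j < length ((G @ [\<sigma>]) ! j)" if "j \<le> length G" for j
    using hist that by (simp add: histories_def)
  have "l < length \<sigma>"
    using entry[of "length a"] len by (simp add: nth_append)
  moreover have "a ! j < length (G ! j)" if "j < length G" for j
    using entry[of j] that len by (simp add: nth_append)
  ultimately show "a \<in> histories G \<and> l < length \<sigma>"
    using len by (simp add: histories_def)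
qed (auto simp: histories_def nth_append less_Suc_eq)

lemma histories_snoc:
  "histories (G @ [\<sigma>]) = (\<lambda>(a, l). a @ [l]) ` (histories G \<times> {..<length \<sigma>})"
proof (intro set_eqI iffI)
  fix k
  assume k: "k \<in> histories (G @ [\<sigma>])"
  then obtain a l where "k = a @ [l]"
    by (metis length_histories length_append_singleton length_Suc_conv_rev)
  then show "k \<in> (\<lambda>(a, l). a @ [l]) ` (histories G \<times> {..<length \<sigma>})"
    using k by (auto simp: append_singleton_in_histories_iff)
qed (auto simp: append_singleton_in_histories_iff)

lemma finite_histories: "finite (histories F)"
  by (induction F rule: rev_induct) (simp_all add: histories_snoc)

lemma hist_op_snoc:
  assumes "length a = length G"
  shows "hist_op (G @ [\<sigma>]) (a @ [l]) = hist_op G a ** \<sigma> ! l"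
proof -
  have foldr_mult: "foldr (**) Ms M = foldr (**) Ms (mat 1) ** M" for Ms and M :: "'a cmat"
    by (induction Ms) (simp_all add: matrix_mul_assoc)
  have factors: "map (\<lambda>j. (G @ [\<sigma>]) ! j ! ((a @ [l]) ! j)) [0..<length (G @ [\<sigma>])]
      = map (\<lambda>j. G ! j ! (a ! j)) [0..<length G] @ [\<sigma> ! l]"
    using assms by (simp add: nth_append)
  show ?thesis
    unfolding hist_op_def factors by (simp add: foldr_mult[of _ "\<sigma> ! l"])
qed

definition history_vec :: "complex^('n::finite) \<Rightarrow> 'n cmat list list \<Rightarrow> nat list \<Rightarrow> complex^'n" where
  "history_vec \<psi> F a = dagger (hist_op F a) *v \<psi>"

lemma history_vec_snoc:
  "length a = length G \<Longrightarrow> history_vec \<psi> (G @ [\<sigma>]) (a @ [l]) = dagger (\<sigma> ! l) *v history_vec \<psi> G a"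
  by (simp add: history_vec_def hist_op_snoc dagger_mult matrix_vector_mul_assoc)

abbreviation branches :: "complex^('n::finite) \<Rightarrow> 'n cmat list list \<Rightarrow> (complex^'n) set" where
  "branches \<psi> F \<equiv> history_vec \<psi> F ` histories F"

definition orthogonal_branches :: "complex^('n::finite) \<Rightarrow> 'n cmat list list \<Rightarrow> bool" where
  "orthogonal_branches \<psi> F \<longleftrightarrow>
     pairwise (\<lambda>a b. cinner (history_vec \<psi> F a) (history_vec \<psi> F b) = 0) (histories F)"

lemma coherence_outer:
  "coherence (outer \<psi> \<psi>) F a b = cinner (history_vec \<psi> F a) (history_vec \<psi> F b)"
  by (simp add: coherence_def history_vec_def mult_outer outer_mult mtrace_outer)

lemma medium_consistent_pure_iff:
  "medium_consistent (outer \<psi> \<psi>) F \<longleftrightarrow> orthogonal_branches \<psi> F"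
  by (auto simp: medium_consistent_def orthogonal_branches_def pairwise_def hist_prob_def
      coherence_def[symmetric] coherence_outer)

lemma cinner_exh_excl:
  assumes "exh_excl \<sigma>"
  shows "cinner x y = (\<Sum>b<length \<sigma>. cinner (\<sigma> ! b *v x) (\<sigma> ! b *v y))"
proof -
  have "x = (\<Sum>b<length \<sigma>. \<sigma> ! b) *v x"
    using assms by (simp add: exh_excl_def)
  then have "cinner x y = (\<Sum>b<length \<sigma>. cinner (\<sigma> ! b *v x) y)"
    by (metis cinner_sum_left sum_matrix_vector_mult)
  also have "\<dots> = (\<Sum>b<length \<sigma>. cinner (\<sigma> ! b *v x) (\<sigma> ! b *v y))"
  proof (intro sum.cong refl)
    fix b
    assume "b \<in> {..<length \<sigma>}"
    then have "is_projector (\<sigma> ! b)"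
      using assms by (simp add: exh_excl_def)
    then show "cinner (\<sigma> ! b *v x) y = cinner (\<sigma> ! b *v x) (\<sigma> ! b *v y)"
      by (metis cinner_projector_left projector_mult_vec_idem)
  qed
  finally show ?thesis .
qed

lemma history_vec_snoc_exh_excl:
  assumes "exh_excl \<sigma>" and "a \<in> histories G" and "b < length \<sigma>"
  shows "history_vec \<psi> (G @ [\<sigma>]) (a @ [b]) = \<sigma> ! b *v history_vec \<psi> G a"
  using assms by (simp add: exh_excl_def is_projector_def history_vec_snoc length_histories)

lemma orthogonal_branches_snoc_same_outcome:
  assumes "exh_excl \<sigma>" and "orthogonal_branches \<psi> (G @ [\<sigma>])"
    and "a \<in> histories G" and "a' \<in> histories G" and "a \<noteq> a'" and "b < length \<sigma>"
  shows "cinner (\<sigma> ! b *v history_vec \<psi> G a) (\<sigma> ! b *v history_vec \<psi> G a') = 0"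
proof -
  have "a @ [b] \<in> histories (G @ [\<sigma>])" and "a' @ [b] \<in> histories (G @ [\<sigma>])" and "a @ [b] \<noteq> a' @ [b]"
    using assms(3-6) by (simp_all add: append_singleton_in_histories_iff)
  then have "cinner (history_vec \<psi> (G @ [\<sigma>]) (a @ [b])) (history_vec \<psi> (G @ [\<sigma>]) (a' @ [b])) = 0"
    using assms(2) unfolding orthogonal_branches_def pairwise_def by blast
  then show ?thesis
    using assms(1,3,4,6) by (simp add: history_vec_snoc_exh_excl)
qed

lemma orthogonal_branches_butlast:
  assumes "exh_excl \<sigma>" and "orthogonal_branches \<psi> (G @ [\<sigma>])"
  shows "orthogonal_branches \<psi> G"
  unfolding orthogonal_branches_def pairwise_def
proof (intro ballI impI)
  fix a a'
  assume "a \<in> histories G" and "a' \<in> histories G" and "a \<noteq> a'"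
  then have "cinner (\<sigma> ! b *v history_vec \<psi> G a) (\<sigma> ! b *v history_vec \<psi> G a') = 0"
    if "b < length \<sigma>" for b
    using orthogonal_branches_snoc_same_outcome[OF assms] that by blast
  then show "cinner (history_vec \<psi> G a) (history_vec \<psi> G a') = 0"
    by (subst cinner_exh_excl[OF assms(1)]) simp
qed

lemma orthogonal_branches_projected:
  assumes "exh_excl \<sigma>" and "orthogonal_branches \<psi> (G @ [\<sigma>])" and "b < length \<sigma>"
  shows "pairwise (\<lambda>w w'. cinner w w' = 0) ((\<lambda>a. \<sigma> ! b *v history_vec \<psi> G a) ` histories G)"
  using orthogonal_branches_snoc_same_outcome[OF assms(1,2) _ _ _ assms(3)]
  by (auto simp: pairwise_def)

section \<open>Rank-one fine graining of an exhaustive exclusive set\<close>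

definition rank1_projectors :: "(complex^('n::finite)) list \<Rightarrow> 'n cmat list" where
  "rank1_projectors L = map (\<lambda>\<phi>. outer \<phi> \<phi>) L"

lemma rank1_projector_rank1_projectors:
  "orthonormal (set L) \<Longrightarrow> P \<in> set (rank1_projectors L) \<Longrightarrow> rank1_projector P"
  by (auto simp: rank1_projectors_def rank1_projector_def orthonormal_def)

lemma sum_rank1_projectors:
  "distinct L \<Longrightarrow> (\<Sum>k<length L. rank1_projectors L ! k) = (\<Sum>\<phi>\<in>set L. outer \<phi> \<phi>)"
  by (simp add: rank1_projectors_def sum.distinct_set_conv_list sum_list_sum_nth atLeast0LessThan)

lemma exh_excl_rank1_projectors:
  assumes "distinct L" and "orthonormal (set L)" and "(\<Sum>\<phi>\<in>set L. outer \<phi> \<phi>) = mat 1"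
  shows "exh_excl (rank1_projectors L)"
  unfolding exh_excl_def
proof (intro conjI ballI allI impI)
  show "is_projector P" if "P \<in> set (rank1_projectors L)" for P
    using assms(2) that by (auto simp: rank1_projectors_def orthonormal_def is_projector_outer)
  show "(\<Sum>k<length (rank1_projectors L). rank1_projectors L ! k) = mat 1"
    using assms(1,3) sum_rank1_projectors[of L] by (simp add: rank1_projectors_def)
  fix k k'
  assume "k < length (rank1_projectors L)" and "k' < length (rank1_projectors L)"
  then have "k < length L" and "k' < length L"
    by (simp_all add: rank1_projectors_def)
  then have "cinner (L ! k') (L ! k) = (if k = k' then 1 else 0)"
    using orthonormal_cinner[OF assms(2)] assms(1) by (simp add: nth_eq_iff_index_eq)
  then show "rank1_projectors L ! k ** rank1_projectors L ! k' =
      (if k = k' then rank1_projectors L ! k else 0)"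
    using \<open>k < length L\<close> \<open>k' < length L\<close>
    by (simp add: rank1_projectors_def mult_outer outer_mult_vec)
qed

lemma fine_graining_rank1_projectors:
  assumes "distinct L"
    and "\<And>b. b < length \<sigma> \<Longrightarrow> \<Phi> b \<subseteq> set L \<and> \<sigma> ! b = (\<Sum>\<phi>\<in>\<Phi> b. outer \<phi> \<phi>)"
  shows "fine_graining (rank1_projectors L) \<sigma>"
  unfolding fine_graining_def
proof (intro allI impI)
  fix b
  assume "b < length \<sigma>"
  define S where "S = {k. k < length L \<and> L ! k \<in> \<Phi> b}"
  have "inj_on (nth L) S"
    using assms(1) by (rule inj_on_nth) (simp add: S_def)
  have "nth L ` S = \<Phi> b"
    using assms(2)[OF \<open>b < length \<sigma>\<close>] by (force simp: S_def in_set_conv_nth)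
  have "(\<Sum>k\<in>S. rank1_projectors L ! k) = (\<Sum>k\<in>S. outer (L ! k) (L ! k))"
    by (intro sum.cong) (simp_all add: S_def rank1_projectors_def)
  also have "\<dots> = (\<Sum>\<phi>\<in>nth L ` S. outer \<phi> \<phi>)"
    using \<open>inj_on (nth L) S\<close> by (simp add: sum.reindex)
  also have "\<dots> = \<sigma> ! b"
    using \<open>nth L ` S = \<Phi> b\<close> assms(2)[OF \<open>b < length \<sigma>\<close>] by simp
  finally have "\<sigma> ! b = (\<Sum>k\<in>S. rank1_projectors L ! k)" ..
  then show "\<exists>S\<subseteq>{..<length (rank1_projectors L)}. \<sigma> ! b = (\<Sum>k\<in>S. rank1_projectors L ! k)"
    by (intro exI[of _ S]) (auto simp: S_def rank1_projectors_def)
qed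

lemma exh_excl_ranges_orthogonal:
  assumes "exh_excl \<sigma>" and "b < length \<sigma>" and "b' < length \<sigma>" and "b \<noteq> b'"
    and "\<sigma> ! b *v \<phi> = \<phi>" and "\<sigma> ! b' *v \<phi>' = \<phi>'"
  shows "cinner \<phi> \<phi>' = 0"
proof -
  have "is_projector (\<sigma> ! b)" and "\<sigma> ! b ** \<sigma> ! b' = 0"
    using assms(1-4) by (simp_all add: exh_excl_def)
  have "cinner \<phi> \<phi>' = cinner (\<sigma> ! b *v \<phi>) (\<sigma> ! b' *v \<phi>')"
    using assms(5,6) by simp
  also have "\<dots> = cinner \<phi> ((\<sigma> ! b ** \<sigma> ! b') *v \<phi>')"
    using cinner_projector_left[OF \<open>is_projector (\<sigma> ! b)\<close>] by (simp add: matrix_vector_mul_assoc)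
  also have "\<dots> = 0"
    using \<open>\<sigma> ! b ** \<sigma> ! b' = 0\<close> by simp
  finally show ?thesis .
qed

lemma projector_bases_Union:
  assumes ex: "exh_excl \<sigma>"
    and bases: "\<And>b. b < length \<sigma> \<Longrightarrow> finite (\<Phi> b) \<and> orthonormal (\<Phi> b) \<and> \<sigma> ! b = (\<Sum>\<phi>\<in>\<Phi> b. outer \<phi> \<phi>)"
  shows "orthonormal (\<Union>b<length \<sigma>. \<Phi> b)" and "disjoint_family_on \<Phi> {..<length \<sigma>}"
    and "(\<Sum>\<phi>\<in>(\<Union>b<length \<sigma>. \<Phi> b). outer \<phi> \<phi>) = mat 1"
proof -
  have cross: "cinner \<phi> \<phi>' = 0"
    if "b < length \<sigma>" "b' < length \<sigma>" "b \<noteq> b'" "\<phi> \<in> \<Phi> b" "\<phi>' \<in> \<Phi> b'" for b b' \<phi> \<phi>'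
    using exh_excl_ranges_orthogonal[OF ex that(1-3)] bases that sum_outer_mult_vec by metis
  show disj: "disjoint_family_on \<Phi> {..<length \<sigma>}"
    unfolding disjoint_family_on_def
  proof (intro ballI impI)
    fix b b'
    assume "b \<in> {..<length \<sigma>}" "b' \<in> {..<length \<sigma>}" "b \<noteq> b'"
    then have "cinner \<phi> \<phi> = 0" if "\<phi> \<in> \<Phi> b \<inter> \<Phi> b'" for \<phi>
      using cross that by simp
    then show "\<Phi> b \<inter> \<Phi> b' = {}"
      using bases \<open>b \<in> {..<length \<sigma>}\<close> by (fastforce simp: orthonormal_def)
  qed
  show "orthonormal (\<Union>b<length \<sigma>. \<Phi> b)"
    unfolding orthonormal_def pairwise_def
  proof (intro conjI ballI impI)
    show "norm \<phi> = 1" if "\<phi> \<in> (\<Union>b<length \<sigma>. \<Phi> b)" for \<phi>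
      using that bases by (auto simp: orthonormal_def)
    fix \<phi> \<phi>'
    assume "\<phi> \<in> (\<Union>b<length \<sigma>. \<Phi> b)" "\<phi>' \<in> (\<Union>b<length \<sigma>. \<Phi> b)" "\<phi> \<noteq> \<phi>'"
    then obtain b b' where "b < length \<sigma>" "\<phi> \<in> \<Phi> b" "b' < length \<sigma>" "\<phi>' \<in> \<Phi> b'"
      by blast
    then show "cinner \<phi> \<phi>' = 0"
      using cross bases[of b] orthonormal_cinner[of "\<Phi> b" \<phi> \<phi>'] \<open>\<phi> \<noteq> \<phi>'\<close> by (cases "b = b'") auto
  qed
  have "(\<Sum>\<phi>\<in>(\<Union>b<length \<sigma>. \<Phi> b). outer \<phi> \<phi>) = (\<Sum>b<length \<sigma>. \<Sum>\<phi>\<in>\<Phi> b. outer \<phi> \<phi>)"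
    using bases disj by (intro sum.UNION_disjoint) (auto simp: disjoint_family_on_def)
  also have "\<dots> = (\<Sum>b<length \<sigma>. \<sigma> ! b)"
    using bases by (intro sum.cong) simp_all
  finally show "(\<Sum>\<phi>\<in>(\<Union>b<length \<sigma>. \<Phi> b). outer \<phi> \<phi>) = mat 1"
    using ex by (simp add: exh_excl_def)
qed

lemma orthonormal_sgn_cases:
  assumes "orthonormal \<Phi>" and "\<phi> \<in> \<Phi>" and "w \<noteq> 0 \<Longrightarrow> sgn w \<in> \<Phi>"
  shows "sgn w = \<phi> \<or> cinner w \<phi> = 0"
proof (cases "w = 0")
  case False
  then have "sgn w = \<phi> \<or> cinner (sgn w) \<phi> = 0"
    using orthonormal_cinner[OF assms(1) assms(3) assms(2)] by auto
  then show ?thesis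
    by (auto simp: sgn_vec_eq_scalar)
qed simp

lemma exists_rank1_fine_graining:
  assumes ex: "exh_excl \<sigma>"
    and "\<And>b. b < length \<sigma> \<Longrightarrow> finite (W b)"
    and "\<And>b w. b < length \<sigma> \<Longrightarrow> w \<in> W b \<Longrightarrow> \<sigma> ! b *v w = w"
    and "\<And>b. b < length \<sigma> \<Longrightarrow> pairwise (\<lambda>w w'. cinner w w' = 0) (W b)"
  obtains L where "distinct L" and "orthonormal (set L)"
    and "exh_excl (rank1_projectors L)" and "fine_graining (rank1_projectors L) \<sigma>"
    and "\<And>l. l < length L \<Longrightarrow> \<exists>b<length \<sigma>. \<sigma> ! b *v L ! l = L ! l \<and>
                                  (\<forall>w\<in>W b. sgn w = L ! l \<or> cinner w (L ! l) = 0)"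
proof -
  have "\<exists>\<Phi>. finite \<Phi> \<and> orthonormal \<Phi> \<and> \<sigma> ! b = (\<Sum>\<phi>\<in>\<Phi>. outer \<phi> \<phi>) \<and> sgn ` (W b - {0}) \<subseteq> \<Phi>"
    if "b < length \<sigma>" for b
    using ex that
    by (intro projector_orthonormal_decomposition assms(2-4)) (simp_all add: exh_excl_def)
  then have "\<forall>b\<in>{..<length \<sigma>}. \<exists>\<Phi>. finite \<Phi> \<and> orthonormal \<Phi> \<and>
      \<sigma> ! b = (\<Sum>\<phi>\<in>\<Phi>. outer \<phi> \<phi>) \<and> sgn ` (W b - {0}) \<subseteq> \<Phi>"
    by blast
  from bchoice[OF this] obtain \<Phi> where \<Phi>: "\<forall>b\<in>{..<length \<sigma>}. finite (\<Phi> b) \<and> orthonormal (\<Phi> b) \<and>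
      \<sigma> ! b = (\<Sum>\<phi>\<in>\<Phi> b. outer \<phi> \<phi>) \<and> sgn ` (W b - {0}) \<subseteq> \<Phi> b"
    by blast
  then have \<Phi>_basis: "\<And>b. b < length \<sigma> \<Longrightarrow>
      finite (\<Phi> b) \<and> orthonormal (\<Phi> b) \<and> \<sigma> ! b = (\<Sum>\<phi>\<in>\<Phi> b. outer \<phi> \<phi>)"
    and \<Phi>_sgn: "\<And>b. b < length \<sigma> \<Longrightarrow> sgn ` (W b - {0}) \<subseteq> \<Phi> b"
    by simp_all
  note U = projector_bases_Union[OF ex \<Phi>_basis]
  have "finite (\<Union>b<length \<sigma>. \<Phi> b)"
    using \<Phi>_basis by blast
  then obtain L where L: "set L = (\<Union>b<length \<sigma>. \<Phi> b)" and "distinct L"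
    using finite_distinct_list by blast
  show ?thesis
  proof (rule that)
    show "distinct L" and "orthonormal (set L)"
      using \<open>distinct L\<close> U(1) L by simp_all
    then show "exh_excl (rank1_projectors L)"
      using U(3) L by (intro exh_excl_rank1_projectors) simp_all
    show "fine_graining (rank1_projectors L) \<sigma>"
      using \<open>distinct L\<close> \<Phi>_basis L by (intro fine_graining_rank1_projectors[where \<Phi> = \<Phi>]) auto
    fix l
    assume "l < length L"
    then obtain b where "b < length \<sigma>" and "L ! l \<in> \<Phi> b"
      using L nth_mem by blast
    moreover have "\<sigma> ! b *v L ! l = L ! l"
      using \<Phi>_basis[OF \<open>b < length \<sigma>\<close>] \<open>L ! l \<in> \<Phi> b\<close> sum_outer_mult_vec by metis
    moreover have "sgn w = L ! l \<or> cinner w (L ! l) = 0" if "w \<in> W b" for w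
      using \<Phi>_basis[OF \<open>b < length \<sigma>\<close>] \<Phi>_sgn[OF \<open>b < length \<sigma>\<close>] \<open>L ! l \<in> \<Phi> b\<close> that
      by (intro orthonormal_sgn_cases[where \<Phi> = "\<Phi> b"]) auto
    ultimately show "\<exists>b<length \<sigma>. \<sigma> ! b *v L ! l = L ! l \<and>
        (\<forall>w\<in>W b. sgn w = L ! l \<or> cinner w (L ! l) = 0)"
      by blast
  qed
qed

lemma component_along_fixed_vector:
  assumes "is_projector P" and "P *v \<phi> = \<phi>" and "sgn (P *v x) = \<phi> \<or> cinner (P *v x) \<phi> = 0"
  shows "cinner x \<phi> *s \<phi> \<in> {0, P *v x}"
proof -
  have "cinner x \<phi> = cinner (P *v x) \<phi>"
    using cinner_projector_left[OF assms(1)] assms(2) by simp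
  then show ?thesis
    using assms(3) cinner_sgn_scale[of "P *v x"] by auto
qed

section \<open>Refining a family with orthogonal branches\<close>

definition rank1_refinement :: "('n::finite) cmat list list \<Rightarrow> 'n cmat list list \<Rightarrow> bool" where
  "rank1_refinement F' F \<longleftrightarrow> length F' = length F \<and>
     (\<forall>i<length F. exh_excl (F' ! i) \<and> (\<forall>P\<in>set (F' ! i). rank1_projector P) \<and>
                    fine_graining (F' ! i) (F ! i))"

lemma rank1_refinement_snocI:
  assumes "rank1_refinement G' G" and "exh_excl \<sigma>'" and "\<forall>P\<in>set \<sigma>'. rank1_projector P"
    and "fine_graining \<sigma>' \<sigma>"
  shows "rank1_refinement (G' @ [\<sigma>']) (G @ [\<sigma>])"
  using assms by (auto simp: rank1_refinement_def nth_append less_Suc_eq)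

locale refinement_step =
  fixes \<psi> :: "complex^('n::finite)" and G G' :: "'n cmat list list" and \<sigma> :: "'n cmat list"
    and L :: "(complex^'n) list"
  assumes exh: "exh_excl \<sigma>"
    and orth: "orthogonal_branches \<psi> (G @ [\<sigma>])"
    and orth': "orthogonal_branches \<psi> G'"
    and branches': "branches \<psi> G' \<subseteq> insert 0 (branches \<psi> G)"
    and distinct_L: "distinct L"
    and orthonormal_L: "orthonormal (set L)"
    and adapted: "\<And>l. l < length L \<Longrightarrow> \<exists>b<length \<sigma>. \<sigma> ! b *v L ! l = L ! l \<and>
        (\<forall>w\<in>(\<lambda>a. \<sigma> ! b *v history_vec \<psi> G a) ` histories G. sgn w = L ! l \<or> cinner w (L ! l) = 0)"
begin

abbreviation refined :: "'n cmat list list" where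
  "refined \<equiv> G' @ [rank1_projectors L]"

lemma history_vec_refined:
  assumes "k \<in> histories G'" and "l < length L"
  shows "history_vec \<psi> refined (k @ [l]) = cinner (history_vec \<psi> G' k) (L ! l) *s L ! l"
  using assms
  by (simp add: rank1_projectors_def history_vec_snoc length_histories dagger_outer outer_mult_vec)

lemma histories_refined:
  "histories refined = (\<lambda>(k, l). k @ [l]) ` (histories G' \<times> {..<length L})"
  by (simp add: rank1_projectors_def histories_snoc)

lemma refined_branch_cases:
  assumes "k \<in> histories G'" and "l < length L" and "b < length \<sigma>" and "\<sigma> ! b *v L ! l = L ! l"
    and "\<forall>w\<in>(\<lambda>a. \<sigma> ! b *v history_vec \<psi> G a) ` histories G. sgn w = L ! l \<or> cinner w (L ! l) = 0"
  shows "history_vec \<psi> refined (k @ [l]) = 0 \<or>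
    (\<exists>a\<in>histories G. history_vec \<psi> G' k = history_vec \<psi> G a \<and>
                     history_vec \<psi> refined (k @ [l]) = history_vec \<psi> (G @ [\<sigma>]) (a @ [b]))"
proof (cases "history_vec \<psi> G' k = 0")
  case True
  then show ?thesis
    using history_vec_refined[OF assms(1,2)] by simp
next
  case False
  then obtain a where "a \<in> histories G" and a: "history_vec \<psi> G' k = history_vec \<psi> G a"
    using branches' assms(1) by blast
  have "is_projector (\<sigma> ! b)"
    using exh assms(3) by (simp add: exh_excl_def)
  then have "cinner (history_vec \<psi> G a) (L ! l) *s L ! l \<in> {0, \<sigma> ! b *v history_vec \<psi> G a}"
    using assms(4,5) \<open>a \<in> histories G\<close> by (intro component_along_fixed_vector) auto
  then show ?thesis
    using history_vec_refined[OF assms(1,2)] \<open>a \<in> histories G\<close> a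
      history_vec_snoc_exh_excl[OF exh \<open>a \<in> histories G\<close> assms(3)]
    by auto
qed

lemma refined_branches:
  "branches \<psi> refined \<subseteq> insert 0 (branches \<psi> (G @ [\<sigma>]))"
proof
  fix v
  assume "v \<in> branches \<psi> refined"
  then obtain k l where "k \<in> histories G'" and "l < length L"
    and "v = history_vec \<psi> refined (k @ [l])"
    unfolding histories_refined by auto
  moreover obtain b where "b < length \<sigma>" and "\<sigma> ! b *v L ! l = L ! l"
    and "\<forall>w\<in>(\<lambda>a. \<sigma> ! b *v history_vec \<psi> G a) ` histories G. sgn w = L ! l \<or> cinner w (L ! l) = 0"
    using adapted[OF \<open>l < length L\<close>] by blast
  ultimately show "v \<in> insert 0 (branches \<psi> (G @ [\<sigma>]))"
    using refined_branch_cases[of k l b] by (force simp: append_singleton_in_histories_iff)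
qed

lemma refined_branches_same_outcome_orthogonal:
  assumes "k \<in> histories G'" and "k' \<in> histories G'" and "k \<noteq> k'" and "l < length L"
  shows "cinner (history_vec \<psi> refined (k @ [l])) (history_vec \<psi> refined (k' @ [l])) = 0"
proof (cases "history_vec \<psi> refined (k @ [l]) = 0 \<or> history_vec \<psi> refined (k' @ [l]) = 0")
  case False
  obtain b where b: "b < length \<sigma>" "\<sigma> ! b *v L ! l = L ! l"
    "\<forall>w\<in>(\<lambda>a. \<sigma> ! b *v history_vec \<psi> G a) ` histories G. sgn w = L ! l \<or> cinner w (L ! l) = 0"
    using adapted[OF assms(4)] by blast
  then obtain a a' where a: "a \<in> histories G" "history_vec \<psi> G' k = history_vec \<psi> G a"
      "history_vec \<psi> refined (k @ [l]) = history_vec \<psi> (G @ [\<sigma>]) (a @ [b])"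
    and a': "a' \<in> histories G" "history_vec \<psi> G' k' = history_vec \<psi> G a'"
      "history_vec \<psi> refined (k' @ [l]) = history_vec \<psi> (G @ [\<sigma>]) (a' @ [b])"
    using False refined_branch_cases[OF assms(1,4) b] refined_branch_cases[OF assms(2,4) b] by auto
  have "a \<noteq> a'"
  proof
    assume "a = a'"
    then have "history_vec \<psi> G' k = history_vec \<psi> G' k'"
      using a(2) a'(2) by simp
    moreover have "cinner (history_vec \<psi> G' k) (history_vec \<psi> G' k') = 0"
      using orth' assms(1-3) by (simp add: orthogonal_branches_def pairwise_def)
    ultimately have "history_vec \<psi> G' k = 0"
      by simp
    then show False
      using False history_vec_refined[OF assms(1,4)] by simp
  qed
  then show ?thesis
    using orth a(1,3) a'(1,3) b(1)
    by (simp add: orthogonal_branches_def pairwise_def append_singleton_in_histories_iff)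
qed auto

lemma orthogonal_branches_refined: "orthogonal_branches \<psi> refined"
  unfolding orthogonal_branches_def pairwise_def
proof (intro ballI impI)
  fix x x'
  assume "x \<in> histories refined" and "x' \<in> histories refined" and "x \<noteq> x'"
  then obtain k l k' l' where k: "k \<in> histories G'" "l < length L"
    and k': "k' \<in> histories G'" "l' < length L" and x: "x = k @ [l]" and x': "x' = k' @ [l']"
    unfolding histories_refined by auto
  show "cinner (history_vec \<psi> refined x) (history_vec \<psi> refined x') = 0"
  proof (cases "l = l'")
    case True
    then show ?thesis
      using refined_branches_same_outcome_orthogonal[OF k(1) k'(1) _ k(2)] \<open>x \<noteq> x'\<close> x x' by simp
  next
    case False
    then have "cinner (L ! l) (L ! l') = 0"
      using orthonormal_cinner[OF orthonormal_L] distinct_L k(2) k'(2)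
      by (simp add: nth_eq_iff_index_eq)
    then show ?thesis
      using history_vec_refined k k' x x' by simp
  qed
qed

end

lemma rank1_refinement_step:
  assumes ex: "exh_excl \<sigma>" and orth: "orthogonal_branches \<psi> (G @ [\<sigma>])"
    and "rank1_refinement G' G" and "orthogonal_branches \<psi> G'"
    and "branches \<psi> G' \<subseteq> insert 0 (branches \<psi> G)"
  obtains \<sigma>' where "rank1_refinement (G' @ [\<sigma>']) (G @ [\<sigma>])"
    and "orthogonal_branches \<psi> (G' @ [\<sigma>'])"
    and "branches \<psi> (G' @ [\<sigma>']) \<subseteq> insert 0 (branches \<psi> (G @ [\<sigma>]))"
proof -
  define W where "W b = (\<lambda>a. \<sigma> ! b *v history_vec \<psi> G a) ` histories G" for b
  have proj: "is_projector (\<sigma> ! b)" if "b < length \<sigma>" for b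
    using ex that by (simp add: exh_excl_def)
  have W_pairwise: "pairwise (\<lambda>w w'. cinner w w' = 0) (W b)" if "b < length \<sigma>" for b
    unfolding W_def using ex orth that by (rule orthogonal_branches_projected)
  have W_fixed: "\<sigma> ! b *v w = w" if "b < length \<sigma>" and "w \<in> W b" for b w
    using that projector_mult_vec_idem[OF proj] by (auto simp: W_def)
  have W_finite: "finite (W b)" for b
    by (simp add: W_def finite_histories)
  obtain L where "distinct L" and "orthonormal (set L)"
    and "exh_excl (rank1_projectors L)" and "fine_graining (rank1_projectors L) \<sigma>"
    and adapted: "\<And>l. l < length L \<Longrightarrow> \<exists>b<length \<sigma>. \<sigma> ! b *v L ! l = L ! l \<and>
                                  (\<forall>w\<in>W b. sgn w = L ! l \<or> cinner w (L ! l) = 0)"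
    using exists_rank1_fine_graining[where W = W, OF ex W_finite W_fixed W_pairwise] by blast
  interpret refinement_step \<psi> G G' \<sigma> L
    by unfold_locales
      (fact assms(1,2,4,5) \<open>distinct L\<close> \<open>orthonormal (set L)\<close> adapted[unfolded W_def])+
  show ?thesis
  proof (rule that)
    show "rank1_refinement refined (G @ [\<sigma>])"
      using \<open>rank1_refinement G' G\<close> \<open>exh_excl (rank1_projectors L)\<close>
        \<open>fine_graining (rank1_projectors L) \<sigma>\<close>
        rank1_projector_rank1_projectors[OF \<open>orthonormal (set L)\<close>]
      by (intro rank1_refinement_snocI) auto
  qed (fact orthogonal_branches_refined refined_branches)+
qed

lemma rank1_refinement_exists:
  assumes "\<forall>\<sigma>\<in>set F. exh_excl \<sigma>" and "orthogonal_branches \<psi> F"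
  shows "\<exists>F'. rank1_refinement F' F \<and> orthogonal_branches \<psi> F' \<and>
           branches \<psi> F' \<subseteq> insert 0 (branches \<psi> F)"
  using assms
proof (induction F rule: rev_induct)
  case Nil
  then show ?case
    by (intro exI[of _ "[]"]) (simp add: rank1_refinement_def orthogonal_branches_def)
next
  case (snoc \<sigma> G)
  then have "exh_excl \<sigma>" and "orthogonal_branches \<psi> G"
    using orthogonal_branches_butlast by auto
  then obtain G' where "rank1_refinement G' G" and "orthogonal_branches \<psi> G'"
    and "branches \<psi> G' \<subseteq> insert 0 (branches \<psi> G)"
    using snoc by auto
  then obtain \<sigma>' where "rank1_refinement (G' @ [\<sigma>']) (G @ [\<sigma>])"
    and "orthogonal_branches \<psi> (G' @ [\<sigma>'])"
    and "branches \<psi> (G' @ [\<sigma>']) \<subseteq> insert 0 (branches \<psi> (G @ [\<sigma>]))"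
    using rank1_refinement_step \<open>exh_excl \<sigma>\<close> snoc.prems(2) by blast
  then show ?case
    by blast
qed

theorem theorem1:
  fixes \<rho> :: "('n::finite) cmat" and F :: "'n cmat list list"
  assumes "pure_state \<rho>"
    and "\<forall>\<sigma>\<in>set F. exh_excl \<sigma>"
    and "medium_consistent \<rho> F"
  shows "\<exists>F'. length F' = length F \<and>
           (\<forall>i<length F. exh_excl (F' ! i) \<and>
                          (\<forall>P\<in>set (F' ! i). rank1_projector P) \<and>
                          fine_graining (F' ! i) (F ! i)) \<and>
           medium_consistent \<rho> F'"
proof -
  obtain \<psi> where \<rho>: "\<rho> = outer \<psi> \<psi>"
    using assms(1) by (auto simp: pure_state_def)
  then obtain F' where "rank1_refinement F' F" and "orthogonal_branches \<psi> F'"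
    using rank1_refinement_exists[OF assms(2)] assms(3) medium_consistent_pure_iff by blast
  then show ?thesis
    using \<rho> medium_consistent_pure_iff by (auto simp: rank1_refinement_def)
qed

end
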